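(* Let $\mathcal V$ be a finite vocabulary, $L\ge1$, $P$ a distribution on $\mathcal V^L$, and $Q_\theta$ an autoregressive model on $\mathcal V^L$ whose conditionals $Q_\theta(\cdot\mid\mathbf x_{<l})$ are strictly positive and differentiable in the parameter $\theta$. Let $\alpha\in(0,1)\cup(1,\infty)$. For $\mathbf x\in\mathcal V^L$ and $l\in\{1,\dots,L\}$ let $\widehat P^{x_l}_{<l}$ be the point mass at $x_l$ (the $\gamma$-proxy distribution with $\gamma=1$). Then for every $\theta$, $$\nabla_\theta\,\mathbb E_{\mathbf x\sim P}\Big[\sum_{l=1}^L D_\alpha\big(\widehat P^{x_l}_{<l}\,\Vert\, Q_\theta(\cdot\mid\mathbf x_{<l})\big)\Big]=\nabla_\theta \mathcal L^\alpha_{\mathrm{cDiv}}(\theta),$$ where $\mathcal L^\alpha_{\mathrm{cDiv}}(\theta)=-\mathbb E_{\mathbf x\sim P}\big[\sum_{l=1}^L \bar Q_\theta(x_l\mid\mathbf x_{<l})^{1-\alpha}\log Q_\theta(x_l\mid\mathbf x_{<l})\big]$ and $\bar Q_\theta$ denotes $Q_\theta$ treated as a constant with respect to $\theta$ when differentiating (so $\nabla_\theta\mathcal L^\alpha_{\mathrm{cDiv}}(\theta)=-\mathbb E_{\mathbf x\sim P}[\sum_l Q_\theta(x_l\mid\mathbf x_{<l})^{1-\alpha}\nabla_\theta\log Q_\theta(x_l\mid\mathbf x_{<l})]$). That is, minimizing these conditional $\alpha$-divergences is equivalent (in the sense of identical gradients) to minimizing $\mathcal L^\alpha_{\mathrm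{cDiv}}$.
   Context: The (Tsallis) $\alpha$-divergence between distributions $p,q$ on a finite set is $D_\alpha(p\Vert q)=\frac{1}{\alpha-1}\big(\sum_{x}p(x)^\alpha q(x)^{1-\alpha}-1\big)$, with the convention $0^\alpha=0$. For $\gamma\in[0,1]$, the $\gamma$-proxy of the conditional target at position $l$ given an observed token $x_l$ is $\widehat P^{x_l}_{<l}(\cdot)=\gamma\,\mathbf 1_{\{x_l=\cdot\}}+(1-\gamma)Q_\theta(\cdot\mid\mathbf x_{<l})$. *)

theory Defs
  imports "HOL-Analysis.Analysis"
begin

text \<open>Tsallis alpha-divergence on a finite type; 0 powr a = 0 gives the convention 0^alpha = 0.\<close>
definition tsallis_div :: "real \<Rightarrow> ('v::finite \<Rightarrow> real) \<Rightarrow> ('v \<Rightarrow> real) \<Rightarrow> real" where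
  "tsallis_div \<alpha> p q = ((\<Sum>x\<in>UNIV. p x powr \<alpha> * q x powr (1 - \<alpha>)) - 1) / (\<alpha> - 1)"

definition gamma_proxy :: "real \<Rightarrow> 'v \<Rightarrow> ('v \<Rightarrow> real) \<Rightarrow> ('v \<Rightarrow> real)" where
  "gamma_proxy \<gamma> xl Qc = (\<lambda>v. \<gamma> * (if xl = v then 1 else 0) + (1 - \<gamma>) * Qc v)"

definition seq_expect :: "nat \<Rightarrow> ('v list \<Rightarrow> real) \<Rightarrow> ('v list \<Rightarrow> real) \<Rightarrow> real" where
  "seq_expect L P f = (\<Sum>xs\<in>{xs. length xs = L}. P xs * f xs)"

text \<open>Objective: expected sum of conditional alpha-divergences to the gamma-proxy.
  Positions l = 0..L-1 (0-indexed): x_l = xs!l, prefix x_{<l} = take l xs.\<close>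
definition cond_div_obj ::
  "real \<Rightarrow> real \<Rightarrow> nat \<Rightarrow> ('v::finite list \<Rightarrow> real) \<Rightarrow> ('p \<Rightarrow> 'v list \<Rightarrow> 'v \<Rightarrow> real) \<Rightarrow> 'p \<Rightarrow> real" where
  "cond_div_obj \<gamma> \<alpha> L P Q \<theta> = seq_expect L P (\<lambda>xs. \<Sum>l<L.
      tsallis_div \<alpha> (gamma_proxy \<gamma> (xs ! l) (Q \<theta> (take l xs))) (Q \<theta> (take l xs)))"

text \<open>L_cDiv with the stop-gradient factor: \<theta>0 is the frozen parameter (Q-bar),
  \<theta> the differentiated one.\<close>
definition L_cDiv ::
  "real \<Rightarrow> nat \<Rightarrow> ('v list \<Rightarrow> real) \<Rightarrow> ('p \<Rightarrow> 'v list \<Rightarrow> 'v \<Rightarrow> real) \<Rightarrow> 'p \<Rightarrow> 'p \<Rightarrow> real" where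
  "L_cDiv \<alpha> L P Q \<theta>0 \<theta> = - seq_expect L P (\<lambda>xs. \<Sum>l<L.
      Q \<theta>0 (take l xs) (xs ! l) powr (1 - \<alpha>) * ln (Q \<theta> (take l xs) (xs ! l)))"

end

theory Submission
  imports Defs
begin

text \<open>For \<gamma> = 1 the proxy is the point mass at the observed token, so the conditional
  divergence collapses to (q powr (1 - \<alpha>) - 1) / (\<alpha> - 1), where q is the model probability
  of that token. Its gradient -q powr (-\<alpha>) \<nabla>q = -q powr (1 - \<alpha>) \<nabla> ln q is the gradient of
  -q powr (1 - \<alpha>) ln q with the prefactor frozen at the current parameter; linearity of the
  expectation and of the sum over positions does the rest. Hence only positivity and
  differentiability of the conditionals matter; the weights P need not form a distribution.\<close>

lemma tsallis_div_point_mass: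
  fixes q :: "'v::finite \<Rightarrow> real"
  shows "tsallis_div \<alpha> (gamma_proxy 1 x q) q = (q x powr (1 - \<alpha>) - 1) / (\<alpha> - 1)"
proof -
  have "(\<lambda>v. gamma_proxy 1 x q v powr \<alpha> * q v powr (1 - \<alpha>))
      = (\<lambda>v. if v = x then q x powr (1 - \<alpha>) else 0)"
    by (auto simp: fun_eq_iff gamma_proxy_def)
  then show ?thesis
    unfolding tsallis_div_def by (simp only:) simp
qed

lemma has_derivative_point_mass_divergence:
  fixes f :: "'a::real_normed_vector \<Rightarrow> real"
  assumes f: "(f has_derivative f') (at t within X)" and pos: "0 < f t" and "\<alpha> \<noteq> 1"
  shows "((\<lambda>s. (f s powr (1 - \<alpha>) - 1) / (\<alpha> - 1))
          has_derivative (\<lambda>h. - (f t powr (1 - \<alpha>) * (f' h / f t)))) (at t within X)"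
proof -
  have slope: "(1 - \<alpha>) * f t powr (1 - \<alpha> - 1) / (\<alpha> - 1) = - (f t powr (1 - \<alpha>) / f t)"
  proof -
    have "f t powr (1 - \<alpha> - 1) = f t powr (1 - \<alpha>) / f t"
      unfolding powr_diff[of "f t" "1 - \<alpha>" 1] using pos by simp
    then show ?thesis
      using pos \<open>\<alpha> \<noteq> 1\<close> by (simp add: divide_simps) (simp add: algebra_simps)
  qed
  have "DERIV (\<lambda>r. (r powr (1 - \<alpha>) - 1) / (\<alpha> - 1)) (f t) :> - (f t powr (1 - \<alpha>) / f t)"
    unfolding slope[symmetric] using pos \<open>\<alpha> \<noteq> 1\<close> by (auto intro!: derivative_eq_intros)
  from DERIV_compose_FDERIV[OF this f] show ?thesis
    by (simp add: mult.commute)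
qed

lemma has_derivative_seq_expect:
  assumes "\<And>xs. length xs = L \<Longrightarrow> ((\<lambda>s. f s xs) has_derivative f' xs) F"
  shows "((\<lambda>s. seq_expect L P (f s)) has_derivative (\<lambda>h. seq_expect L P (\<lambda>xs. f' xs h))) F"
  unfolding seq_expect_def using assms by (auto intro!: derivative_eq_intros)

lemma cond_div_obj_point_mass:
  "cond_div_obj 1 \<alpha> L P Q \<theta>
    = seq_expect L P (\<lambda>xs. \<Sum>l<L. (Q \<theta> (take l xs) (xs ! l) powr (1 - \<alpha>) - 1) / (\<alpha> - 1))"
  by (simp add: cond_div_obj_def tsallis_div_point_mass)

lemma L_cDiv_eq_seq_expect:
  "L_cDiv \<alpha> L P Q \<theta>0 \<theta>
    = seq_expect L P (\<lambda>xs. \<Sum>l<L. - (Q \<theta>0 (take l xs) (xs ! l) powr (1 - \<alpha>) * ln (Q \<theta> (take l xs) (xs ! l))))"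
  by (simp add: L_cDiv_def seq_expect_def sum_negf)

theorem theorem5p4:
  fixes L :: nat and \<alpha> :: real
    and P :: "'v::finite list \<Rightarrow> real"
    and Q :: "'p::euclidean_space \<Rightarrow> 'v list \<Rightarrow> 'v \<Rightarrow> real"
    and \<theta> :: 'p
  assumes L_pos: "L \<ge> 1"
    and P_nonneg: "\<And>xs. length xs = L \<Longrightarrow> P xs \<ge> 0"
    and P_sum: "(\<Sum>xs\<in>{xs. length xs = L}. P xs) = 1"
    and Q_pos: "\<And>t xs v. length xs < L \<Longrightarrow> Q t xs v > 0"
    and Q_sum: "\<And>t xs. length xs < L \<Longrightarrow> (\<Sum>v\<in>UNIV. Q t xs v) = 1"
    and Q_diff: "\<And>t xs v. length xs < L \<Longrightarrow> (\<lambda>s. Q s xs v) differentiable (at t)"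
    and alpha: "\<alpha> > 0" "\<alpha> \<noteq> 1"
  shows "\<exists>D. (cond_div_obj 1 \<alpha> L P Q has_derivative D) (at \<theta>)
           \<and> (L_cDiv \<alpha> L P Q \<theta> has_derivative D) (at \<theta>)"
proof -
  obtain F where F: "\<And>ys v. length ys < L \<Longrightarrow> ((\<lambda>s. Q s ys v) has_derivative F ys v) (at \<theta>)"
    using Q_diff[where t = \<theta>] unfolding differentiable_def by metis
  define D where "D = (\<lambda>h. seq_expect L P (\<lambda>xs. \<Sum>l<L.
    - (Q \<theta> (take l xs) (xs ! l) powr (1 - \<alpha>) * (F (take l xs) (xs ! l) h / Q \<theta> (take l xs) (xs ! l)))))"
  have "(cond_div_obj 1 \<alpha> L P Q has_derivative D) (at \<theta>)"
    unfolding cond_div_obj_point_mass[abs_def] D_def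
    by (intro has_derivative_seq_expect has_derivative_sum has_derivative_point_mass_divergence
        F Q_pos alpha(2)) auto
  moreover have "(L_cDiv \<alpha> L P Q \<theta> has_derivative D) (at \<theta>)"
    unfolding L_cDiv_eq_seq_expect[abs_def] D_def
    by (intro has_derivative_seq_expect has_derivative_sum has_derivative_minus has_derivative_mult_right
        has_derivative_ln[OF Q_pos F, THEN has_derivative_eq_rhs]) (auto simp: divide_inverse)
  ultimately show ?thesis by blast
qed

end
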